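(* Let $d\in\mathbb{N}$, $r\in\mathbb{N}$ with $r\ge2$, set $\delta=r^{-7/2}$, $\sigma=\sqrt{\log(1/\delta)}/r$, $\gamma=\sqrt{\tfrac52\log r}$, $R=1+\gamma(2+\sqrt2)\sqrt d\,\sigma$, $b=(R+1)^2/(4\sigma^2)$, and let $\mathcal K_r$ and $\mathcal K_G^{\sigma,R}$ be as in the context. For any $k\in\mathbb{N}$, \[ \|\mathcal K_rT_k-\mathcal K_G^{\sigma,R}T_k\|_\infty\le 2R\,\frac{3\delta}{\sqrt{2\pi}\sigma}\max_{y\in[-R,R]}|T_k(y)|. \] In particular, if $R\le1+\frac{1}{10k^2}$, then $\|\mathcal K_rT_k-\mathcal K_G^{\sigma,R}T_k\|_\infty\le\frac{24\delta}{\sqrt{2\pi}\sigma}$.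
   Context: $T_k(x)=\cos(k\arccos x)$ (extended as a polynomial to $\mathbb{R}$). $\|g\|_\infty=\sup_{x\in[-1,1]}|g(x)|$. $s_{b,\delta}$ is a univariate polynomial of degree $\lceil\sqrt{2\theta\log(4/\delta)}\rceil$, $\theta=\lceil\max\{\tfrac12be^2,\log(2/\delta)\}\rceil$, with $|e^{-t}-s_{b,\delta}(t)|\le\delta$ for all $t\in[0,b]$. $K_r(x,y)=\frac1{\sqrt{2\pi}\sigma}s_{b,\delta}^2\!\left(\frac{(x-y)^2}{4\sigma^2}\right)$, $\mathcal K_r(f)(x)=\int_{-R}^RK_r(x,y)f(y)\,dy$. The Gaussian kernel is $K_G^\sigma(x,y)=\frac1{\sqrt{2\pi}\sigma}\exp\!\left(-\frac{(x-y)^2}{2\sigma^2}\right)$ and the truncated Gauss–Weierstrass operator is $\mathcal K_G^{\sigma,R}(f)(x)=\int_{-R}^RK_G^\sigma(x,y)f(y)\,dy$. $\log$ is the natural logarithm. *)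

theory Defs
  imports "HOL-Analysis.Analysis" "HOL-Computational_Algebra.Polynomial"
begin

definition cheb_poly :: "nat \<Rightarrow> real poly" where
  "cheb_poly k = (THE p. \<forall>x\<in>{-1..1}. poly p x = cos (real k * arccos x))"

definition cheb :: "nat \<Rightarrow> real \<Rightarrow> real" where
  "cheb k x = poly (cheb_poly k) x"

definition sup_norm :: "(real \<Rightarrow> real) \<Rightarrow> real" where
  "sup_norm g = Sup ((\<lambda>x. \<bar>g x\<bar>) ` {-1..1})"

definition Kr :: "real poly \<Rightarrow> real \<Rightarrow> real \<Rightarrow> real \<Rightarrow> real" where
  "Kr s \<sigma> x y = 1 / (sqrt (2 * pi) * \<sigma>) * (poly s ((x - y)^2 / (4 * \<sigma>^2)))^2"

definition Kr_op :: "real poly \<Rightarrow> real \<Rightarrow> real \<Rightarrow> (real \<Rightarrow> real) \<Rightarrow> real \<Rightarrow> real" where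
  "Kr_op s \<sigma> R f x = integral {-R..R} (\<lambda>y. Kr s \<sigma> x y * f y)"

definition KG :: "real \<Rightarrow> real \<Rightarrow> real \<Rightarrow> real" where
  "KG \<sigma> x y = 1 / (sqrt (2 * pi) * \<sigma>) * exp (- ((x - y)^2) / (2 * \<sigma>^2))"

definition KG_op :: "real \<Rightarrow> real \<Rightarrow> (real \<Rightarrow> real) \<Rightarrow> real \<Rightarrow> real" where
  "KG_op \<sigma> R f x = integral {-R..R} (\<lambda>y. KG \<sigma> x y * f y)"

end

theory Submission
  imports Defs
begin

text \<open>On \<open>[-1,1] \<times> [-R,R]\<close> the argument \<open>t = (x - y)\<^sup>2 / (4\<sigma>\<^sup>2)\<close> of \<open>s\<close> lies in \<open>[0,b]\<close>, and
  \<open>K\<^sub>r - K\<^sub>G = (s(t)\<^sup>2 - (e\<^sup>-\<^sup>t)\<^sup>2) / (\<surd>(2\<pi>) \<sigma>)\<close>.  Since \<open>|s(t) - e\<^sup>-\<^sup>t| \<le> \<delta>\<close> and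
  \<open>|s(t) + e\<^sup>-\<^sup>t| \<le> 2 + \<delta> \<le> 3\<close>, the kernels differ by at most \<open>3\<delta> / (\<surd>(2\<pi>) \<sigma>)\<close>, and
  integrating against \<open>T\<^sub>k\<close> over an interval of length \<open>2R\<close> gives the first bound.
  For the second, \<open>|T\<^sub>k(y)| \<le> (|y| + \<surd>(y\<^sup>2 - 1))\<^sup>k \<le> (1 + 1/k)\<^sup>k \<le> e \<le> 3\<close> whenever
  \<open>1 \<le> |y| \<le> 1 + 1/(10k\<^sup>2)\<close>, and \<open>R \<le> 11/10\<close> gives \<open>2R \<cdot> 3 \<le> 8\<close>.\<close>

fun chebyshev_poly :: "nat \<Rightarrow> real poly" where
  "chebyshev_poly 0 = 1"
| "chebyshev_poly (Suc 0) = [:0, 1:]"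
| "chebyshev_poly (Suc (Suc n)) = [:0, 2:] * chebyshev_poly (Suc n) - chebyshev_poly n"

lemma poly_chebyshev_poly_cos: "poly (chebyshev_poly n) (cos t) = cos (real n * t)"
proof (induction n rule: chebyshev_poly.induct)
  case (3 n)
  have "cos (real (Suc (Suc n)) * t) = cos (real (Suc n) * t + t)"
    and "cos (real n * t) = cos (real (Suc n) * t - t)"
    by (simp_all add: algebra_simps)
  then have "cos (real (Suc (Suc n)) * t) = 2 * cos t * cos (real (Suc n) * t) - cos (real n * t)"
    by (simp add: cos_add cos_diff)
  then show ?case using 3 by simp
qed simp_all

lemma cheb_poly_eq_chebyshev_poly: "cheb_poly k = chebyshev_poly k"
proof -
  have on_interval: "poly (chebyshev_poly k) x = cos (real k * arccos x)" if "x \<in> {-1..1}" for x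
    using poly_chebyshev_poly_cos[of k "arccos x"] that by (simp add: cos_arccos)
  have "p = chebyshev_poly k" if p: "\<forall>x\<in>{-1..1}. poly p x = cos (real k * arccos x)" for p
  proof -
    have "{-1..1::real} \<subseteq> {x. poly (p - chebyshev_poly k) x = 0}"
      using p on_interval by auto
    moreover have "infinite {-1..1::real}" by simp
    ultimately have "p - chebyshev_poly k = 0"
      using poly_roots_finite finite_subset by blast
    then show ?thesis by simp
  qed
  then show ?thesis
    unfolding cheb_poly_def using on_interval by (intro the_equality) auto
qed

lemma cheb_eq_poly_chebyshev_poly: "cheb k x = poly (chebyshev_poly k) x"
  by (simp add: cheb_def cheb_poly_eq_chebyshev_poly)

lemma continuous_on_cheb [continuous_intros]: "continuous_on A (cheb k)"
  unfolding cheb_def by (intro continuous_intros)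

lemma poly_chebyshev_poly_closed_form:
  fixes x w :: real
  assumes "w\<^sup>2 = x\<^sup>2 - 1"
  shows "poly (chebyshev_poly n) x = ((x + w) ^ n + (x - w) ^ n) / 2"
proof (induction n rule: chebyshev_poly.induct)
  case (3 n)
  \<comment> \<open>\<open>x \<plusminus> w\<close> are the roots of \<open>z\<^sup>2 = 2 x z - 1\<close>, the characteristic equation of the recurrence\<close>
  have sq: "(x + w)\<^sup>2 = 2 * x * (x + w) - 1" "(x - w)\<^sup>2 = 2 * x * (x - w) - 1"
    using assms by (simp_all add: power2_eq_square algebra_simps)
  have "(x + w) ^ Suc (Suc n) = (x + w) ^ n * (x + w)\<^sup>2"
    and "(x - w) ^ Suc (Suc n) = (x - w) ^ n * (x - w)\<^sup>2"
    by (simp_all add: power2_eq_square algebra_simps)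
  then have rec: "(x + w) ^ Suc (Suc n) = 2 * x * (x + w) ^ Suc n - (x + w) ^ n"
    "(x - w) ^ Suc (Suc n) = 2 * x * (x - w) ^ Suc n - (x - w) ^ n"
    unfolding sq by (simp_all add: algebra_simps)
  have "poly (chebyshev_poly (Suc (Suc n))) x
      = 2 * x * poly (chebyshev_poly (Suc n)) x - poly (chebyshev_poly n) x"
    by simp
  also have "\<dots> = 2 * x * (((x + w) ^ Suc n + (x - w) ^ Suc n) / 2) - ((x + w) ^ n + (x - w) ^ n) / 2"
    by (simp only: 3)
  also have "\<dots> = ((x + w) ^ Suc (Suc n) + (x - w) ^ Suc (Suc n)) / 2"
    unfolding rec by (simp add: field_simps)
  finally show ?case .
qed simp_all

lemma abs_poly_chebyshev_poly_le_1: "\<bar>x\<bar> \<le> 1 \<Longrightarrow> \<bar>poly (chebyshev_poly n) x\<bar> \<le> 1"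
  using poly_chebyshev_poly_cos[of n "arccos x"] by (simp add: cos_arccos)

lemma abs_poly_chebyshev_poly_le_outside:
  fixes x :: real
  assumes "1 \<le> \<bar>x\<bar>"
  shows "\<bar>poly (chebyshev_poly n) x\<bar> \<le> (\<bar>x\<bar> + sqrt (x\<^sup>2 - 1)) ^ n"
proof -
  define w where "w = sqrt (x\<^sup>2 - 1)"
  have "1 \<le> x\<^sup>2" using assms abs_le_square_iff[of 1 x] by simp
  then have w: "0 \<le> w" "w\<^sup>2 = x\<^sup>2 - 1" by (simp_all add: w_def)
  have "\<bar>poly (chebyshev_poly n) x\<bar> \<le> (\<bar>x + w\<bar> ^ n + \<bar>x - w\<bar> ^ n) / 2"
    using poly_chebyshev_poly_closed_form[OF w(2)]
    by (metis abs_triangle_ineq abs_divide abs_numeral divide_right_mono power_abs zero_le_numeral)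
  also have "\<dots> \<le> ((\<bar>x\<bar> + w) ^ n + (\<bar>x\<bar> + w) ^ n) / 2"
    using w by (intro divide_right_mono add_mono power_mono) auto
  finally show ?thesis by (simp add: w_def)
qed

lemma abs_plus_sqrt_le_near_1:
  fixes x u :: real
  assumes u: "0 \<le> u" "u \<le> 1" and x: "\<bar>x\<bar> \<le> 1 + u\<^sup>2 / 10"
  shows "\<bar>x\<bar> + sqrt (x\<^sup>2 - 1) \<le> 1 + u"
proof -
  define e where "e = u\<^sup>2 / 10"
  have "u\<^sup>2 \<le> u" using u by (simp add: power2_eq_square mult_left_le)
  then have e: "0 \<le> e" "e \<le> u / 10" "e \<le> 1 / 10" using u by (auto simp: e_def)
  have "x\<^sup>2 \<le> (1 + e)\<^sup>2" using x abs_le_square_iff[of x "1 + e"] e by (simp add: e_def)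
  then have "x\<^sup>2 - 1 \<le> e * (2 + e)" by (simp add: power2_eq_square algebra_simps)
  also have "\<dots> \<le> (u\<^sup>2 / 10) * (21 / 10)" using e by (intro mult_mono) (auto simp: e_def)
  also have "\<dots> \<le> (6/10 * u)\<^sup>2" by (simp add: power2_eq_square)
  finally have "sqrt (x\<^sup>2 - 1) \<le> 6/10 * u"
    using u real_sqrt_le_mono real_sqrt_abs[of "6/10 * u"] by fastforce
  then show ?thesis using x e unfolding e_def by linarith
qed

lemma abs_cheb_le_3:
  fixes x :: real
  assumes "\<bar>x\<bar> \<le> 1 + 1 / (10 * real k ^ 2)"
  shows "\<bar>cheb k x\<bar> \<le> 3"
proof (cases "\<bar>x\<bar> \<le> 1")
  case True
  then show ?thesis
    using abs_poly_chebyshev_poly_le_1[OF True, of k] by (simp add: cheb_eq_poly_chebyshev_poly)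
next
  case False
  then have "k \<ge> 1" using assms by (cases k) auto
  define u where "u = 1 / real k"
  have u: "0 < u" "u \<le> 1" using \<open>k \<ge> 1\<close> by (auto simp: u_def)
  have "1 \<le> x\<^sup>2" using False abs_le_square_iff[of 1 x] by simp
  then have base_nonneg: "0 \<le> \<bar>x\<bar> + sqrt (x\<^sup>2 - 1)" by simp
  have "\<bar>cheb k x\<bar> \<le> (\<bar>x\<bar> + sqrt (x\<^sup>2 - 1)) ^ k"
    using abs_poly_chebyshev_poly_le_outside False by (simp add: cheb_eq_poly_chebyshev_poly)
  also have "\<dots> \<le> (1 + u) ^ k"
    using abs_plus_sqrt_le_near_1[of u x] assms u base_nonneg
    by (intro power_mono) (auto simp: u_def power2_eq_square)
  also have "\<dots> \<le> exp u ^ k"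
    using u by (intro power_mono) (auto simp: exp_ge_add_one_self add.commute)
  also have "\<dots> = exp 1" using \<open>k \<ge> 1\<close> by (simp add: u_def exp_of_nat_mult[symmetric])
  also have "\<dots> \<le> 3" by (rule exp_le)
  finally show ?thesis .
qed

lemma abs_square_diff_le:
  fixes p e \<delta> :: real
  assumes "\<bar>p - e\<bar> \<le> \<delta>" "0 \<le> e" "e \<le> 1" "\<delta> \<le> 1"
  shows "\<bar>p\<^sup>2 - e\<^sup>2\<bar> \<le> 3 * \<delta>"
proof -
  have "\<bar>p\<^sup>2 - e\<^sup>2\<bar> = \<bar>p - e\<bar> * \<bar>p + e\<bar>"
    by (simp add: power2_eq_square algebra_simps flip: abs_mult)
  also have "\<dots> \<le> \<delta> * 3"
    using assms by (intro mult_mono) auto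
  finally show ?thesis by simp
qed

lemma continuous_on_Kr [continuous_intros]: "continuous_on A (Kr s \<sigma> x)"
  unfolding Kr_def divide_inverse by (intro continuous_intros)

lemma continuous_on_KG [continuous_intros]: "continuous_on A (KG \<sigma> x)"
  unfolding KG_def divide_inverse by (intro continuous_intros)

lemma abs_Kr_minus_KG_le:
  assumes "0 < \<sigma>" "\<delta> \<le> 1" "\<bar>x - y\<bar> \<le> c"
    and "\<forall>t\<in>{0..c\<^sup>2 / (4 * \<sigma>\<^sup>2)}. \<bar>exp (- t) - poly s t\<bar> \<le> \<delta>"
  shows "\<bar>Kr s \<sigma> x y - KG \<sigma> x y\<bar> \<le> 3 * \<delta> / (sqrt (2 * pi) * \<sigma>)"
proof -
  define t where "t = (x - y)\<^sup>2 / (4 * \<sigma>\<^sup>2)"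
  have "(x - y)\<^sup>2 \<le> c\<^sup>2" using assms(3) abs_le_square_iff[of "x - y" c] by simp
  then have t: "t \<in> {0..c\<^sup>2 / (4 * \<sigma>\<^sup>2)}" by (simp add: t_def divide_right_mono)
  have "- ((x - y)\<^sup>2) / (2 * \<sigma>\<^sup>2) = - t + - t"
    using assms(1) by (simp add: t_def field_simps)
  then have "exp (- ((x - y)\<^sup>2) / (2 * \<sigma>\<^sup>2)) = (exp (- t))\<^sup>2"
    by (simp add: power2_eq_square flip: exp_add)
  then have "\<bar>Kr s \<sigma> x y - KG \<sigma> x y\<bar>
      = \<bar>(poly s t)\<^sup>2 - (exp (- t))\<^sup>2\<bar> / (sqrt (2 * pi) * \<sigma>)"
    using assms(1) by (simp add: Kr_def KG_def t_def abs_divide flip: diff_divide_distrib)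
  also have "\<dots> \<le> 3 * \<delta> / (sqrt (2 * pi) * \<sigma>)"
    using assms t abs_square_diff_le[of "poly s t" "exp (- t)" \<delta>]
    by (intro divide_right_mono) (auto simp: abs_minus_commute)
  finally show ?thesis .
qed

lemma abs_Kr_op_minus_KG_op_le:
  assumes "0 \<le> R" "continuous_on {-R..R} f"
    and "\<forall>y\<in>{-R..R}. \<bar>Kr s \<sigma> x y - KG \<sigma> x y\<bar> \<le> C"
    and "\<forall>y\<in>{-R..R}. \<bar>f y\<bar> \<le> M"
  shows "\<bar>Kr_op s \<sigma> R f x - KG_op \<sigma> R f x\<bar> \<le> 2 * R * C * M"
proof -
  have "0 \<in> {-R..R}" using assms(1) by simp
  then have "0 \<le> C" using assms(3) by force
  have integrable: "(\<lambda>y. Kr s \<sigma> x y * f y) integrable_on {-R..R}"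
      "(\<lambda>y. KG \<sigma> x y * f y) integrable_on {-R..R}"
    using assms(2) by (auto intro: integrable_continuous_interval continuous_on_mult continuous_on_Kr continuous_on_KG)
  have "Kr_op s \<sigma> R f x - KG_op \<sigma> R f x = integral {-R..R} (\<lambda>y. (Kr s \<sigma> x y - KG \<sigma> x y) * f y)"
    unfolding Kr_op_def KG_op_def
    using integral_diff[OF integrable] by (simp add: left_diff_distrib)
  also have "norm \<dots> \<le> C * M * (R - - R)"
  proof (rule integral_bound)
    show "continuous_on {-R..R} (\<lambda>y. (Kr s \<sigma> x y - KG \<sigma> x y) * f y)"
      using assms(2) by (intro continuous_intros)
    fix y assume "y \<in> {-R..R}"
    then show "norm ((Kr s \<sigma> x y - KG \<sigma> x y) * f y) \<le> C * M"
      using assms(3,4) \<open>0 \<le> C\<close> unfolding real_norm_def abs_mult by (intro mult_mono) auto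
  qed (use assms(1) in auto)
  finally show ?thesis by (simp add: mult_ac)
qed

lemma sup_norm_le: "(\<And>x. x \<in> {-1..1} \<Longrightarrow> \<bar>g x\<bar> \<le> B) \<Longrightarrow> sup_norm g \<le> B"
  unfolding sup_norm_def by (intro cSup_least) auto

lemma abs_le_Sup_abs_image:
  fixes f :: "real \<Rightarrow> real"
  assumes "continuous_on {a..b} f" "y \<in> {a..b}"
  shows "\<bar>f y\<bar> \<le> Sup ((\<lambda>y. \<bar>f y\<bar>) ` {a..b})"
proof -
  have "compact ((\<lambda>y. \<bar>f y\<bar>) ` {a..b})"
    using assms(1) by (intro compact_continuous_image continuous_intros) auto
  then show ?thesis
    using assms(2) by (intro cSup_upper) (auto simp: bounded_imp_bdd_above compact_imp_bounded)
qed

lemma two_mult_Sup_abs_cheb_le_8: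
  assumes "0 \<le> R" "R \<le> 1 + 1 / (10 * real k ^ 2)"
  shows "2 * R * Sup ((\<lambda>y. \<bar>cheb k y\<bar>) ` {-R..R}) \<le> 8"
proof -
  define M where "M = Sup ((\<lambda>y. \<bar>cheb k y\<bar>) ` {-R..R})"
  have "1 / (10 * real k ^ 2) \<le> 1 / 10" by (cases "k = 0") (auto simp: field_simps)
  then have "R \<le> 11 / 10" using assms(2) by linarith
  have "M \<le> 3"
    unfolding M_def using assms abs_cheb_le_3 by (intro cSup_least) auto
  moreover have "0 \<le> M"
    unfolding M_def using assms(1) abs_le_Sup_abs_image[OF continuous_on_cheb, of 0 "-R" R k]
    by (simp add: order_trans)
  ultimately have "2 * R * M \<le> 2 * (11 / 10) * 3"
    using assms(1) \<open>R \<le> 11 / 10\<close> by (intro mult_mono) auto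
  then show ?thesis by (simp add: M_def)
qed

theorem lemma13:
  fixes d r k :: nat and s :: "real poly"
    and \<delta> \<sigma> \<gamma> R b :: real and \<theta> :: int
  assumes r2: "r \<ge> 2"
  defines "\<delta> \<equiv> real r powr (-7/2)"
      and "\<sigma> \<equiv> sqrt (ln (1 / \<delta>)) / real r"
      and "\<gamma> \<equiv> sqrt (5/2 * ln (real r))"
      and "R \<equiv> 1 + \<gamma> * (2 + sqrt 2) * sqrt (real d) * \<sigma>"
      and "b \<equiv> (R + 1)^2 / (4 * \<sigma>^2)"
      and "\<theta> \<equiv> \<lceil>max (1/2 * b * (exp 1)^2) (ln (2 / \<delta>))\<rceil>"
  assumes deg_s: "degree s = nat \<lceil>sqrt (2 * real_of_int \<theta> * ln (4 / \<delta>))\<rceil>"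
      and approx_s: "\<forall>t\<in>{0..b}. \<bar>exp (- t) - poly s t\<bar> \<le> \<delta>"
  shows "sup_norm (\<lambda>x. Kr_op s \<sigma> R (cheb k) x - KG_op \<sigma> R (cheb k) x)
           \<le> 2 * R * (3 * \<delta> / (sqrt (2 * pi) * \<sigma>)) * Sup ((\<lambda>y. \<bar>cheb k y\<bar>) ` {-R..R})
       \<and> (R \<le> 1 + 1 / (10 * real k ^ 2) \<longrightarrow>
           sup_norm (\<lambda>x. Kr_op s \<sigma> R (cheb k) x - KG_op \<sigma> R (cheb k) x)
             \<le> 24 * \<delta> / (sqrt (2 * pi) * \<sigma>))"
proof -
  have "0 < \<delta>" "\<delta> < 1" using r2 by (simp_all add: \<delta>_def powr_less_one)
  then have "0 < ln (1 / \<delta>)" by simp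
  then have "0 < \<sigma>" using r2 by (simp add: \<sigma>_def)
  have "0 \<le> \<gamma>" using r2 by (simp add: \<gamma>_def)
  then have "1 \<le> R" using \<open>0 < \<sigma>\<close> by (simp add: R_def)
  define C where "C = 3 * \<delta> / (sqrt (2 * pi) * \<sigma>)"
  define M where "M = Sup ((\<lambda>y. \<bar>cheb k y\<bar>) ` {-R..R})"
  have cheb_le_M: "\<bar>cheb k y\<bar> \<le> M" if "y \<in> {-R..R}" for y
    unfolding M_def using that by (intro abs_le_Sup_abs_image continuous_on_cheb)
  \<comment> \<open>only the approximation property of \<open>s\<close> is used, not its degree\<close>
  have kernel_le_C: "\<bar>Kr s \<sigma> x y - KG \<sigma> x y\<bar> \<le> C" if "x \<in> {-1..1}" "y \<in> {-R..R}" for x y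
    unfolding C_def using that \<open>0 < \<sigma>\<close> \<open>\<delta> < 1\<close> approx_s
    by (intro abs_Kr_minus_KG_le[where c = "R + 1"]) (auto simp: b_def)
  have "sup_norm (\<lambda>x. Kr_op s \<sigma> R (cheb k) x - KG_op \<sigma> R (cheb k) x) \<le> 2 * R * C * M"
    using \<open>1 \<le> R\<close> cheb_le_M kernel_le_C continuous_on_cheb
    by (intro sup_norm_le abs_Kr_op_minus_KG_op_le) auto
  moreover have "2 * R * C * M \<le> 24 * \<delta> / (sqrt (2 * pi) * \<sigma>)"
    if "R \<le> 1 + 1 / (10 * real k ^ 2)"
  proof -
    have "0 \<le> C" using \<open>0 < \<delta>\<close> \<open>0 < \<sigma>\<close> by (simp add: C_def)
    then have "C * (2 * R * M) \<le> C * 8"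
      using two_mult_Sup_abs_cheb_le_8 \<open>1 \<le> R\<close> that by (simp add: M_def mult_left_mono)
    then show ?thesis by (simp add: C_def mult_ac)
  qed
  ultimately show ?thesis unfolding C_def M_def by (blast intro: order_trans)
qed

end
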